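(* Let $T$ be a hedge of height $H$, let $\Lambda=(\alpha_1,\alpha_2,\beta_2,\beta_3,\beta_4)\in\mathcal B$ and let $A\in\mathcal{PH}(C^{\Lambda}_{H+1},T)$. Then $$\mathrm{mult}(\alpha_j,A)=\sum_{\substack{i\ge j\\ i\equiv j \ (\mathrm{mod}\ 2)}}\ell_i(T)\quad(j=1,2),\qquad \mathrm{mult}(\beta_j,A)=\sum_{\substack{i\ge j\\ i\equiv j\ (\mathrm{mod}\ 3)}}\ell_i(T)\quad(j=2,3,4).$$
   Context: Hedges: a rooted tree is a tree with a distinguished root; $y$ is a child of adjacent $z$ if the root-to-$y$ path passes through $z$; a leaf is a non-root vertex of degree 1 (in $P_1$ the single vertex is root and leaf). A hedge is a rooted tree that is $P_1$ or in which all leaves are at equal distance from the root. The height $\mathrm{h}(u)$ of a vertex is its distance to a nearest leaf; the height of the hedge is that of its root; $V_i(T)$ is the set of vertices of height $i$ and $\ell_i(T)=|V_{i-1}(T)|-|V_i(T)|$ for $i\ge1$. $P_n$ is the path $1-\cdots-n$ rooted at $1$ (vertex $j$ has height $n-j$). $\mathcal R(T)$: real matrices indexed by $V(T)$ with $a_{ij}\ne0$ iff $\{i,j\}\in E(T)$ for $i\neq j$, $a_{ij}a_{ji}>0$ on edges, diagonal arbitrary. $\mathrm{mult}(\lambda,A)$ is the algebraic multiplicity. Path-to-hedge: for $C=(c_{ij})\in\mathcal R(P_{H+1})$ and $v\in V(T)$ let $v'=H+1-\mathrm h(v)$; $\mathcal{PH}(C,T)$ is the set of $A\in\mathcal R(T)$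 with $a_{vv}=c_{v'v'}$ for all $v$ and $\sum_{u\text{ child of }v}a_{vu}a_{uv}=c_{v',v'+1}c_{v'+1,v'}$ for all non-leaf $v$. $\mathcal B$ is the set of $(\alpha_1,\alpha_2,\beta_2,\beta_3,\beta_4)\in\mathbb R^5$ with distinct entries satisfying one of: $\beta_2<\alpha_1<\alpha_2<\beta_3<\beta_4$; $\beta_2<\beta_4<\alpha_1<\alpha_2<\beta_3$; $\beta_4<\beta_2<\alpha_1<\alpha_2<\beta_3$ and $\alpha_2+\beta_2>\beta_4+\beta_3$; $\beta_3<\beta_2<\alpha_1<\alpha_2<\beta_4$ and $\alpha_2+\beta_2<\beta_4+\beta_3$; $\beta_3<\beta_2<\beta_4<\alpha_1<\alpha_2$; $\beta_4<\beta_3<\beta_2<\alpha_1<\alpha_2$; $\beta_4<\beta_3<\alpha_2<\alpha_1<\beta_2$; $\beta_3<\alpha_2<\alpha_1<\beta_4<\beta_2$; $\beta_3<\alpha_2<\alpha_1<\beta_2<\beta_4$ and $\alpha_2+\beta_2<\beta_4+\beta_3$; $\beta_4<\alpha_2<\alpha_1<\beta_2<\beta_3$ and $\alpha_2+\beta_2>\beta_4+\beta_3$; $\alpha_2<\alpha_1<\beta_4<\beta_2<\beta_3$; $\alpha_2<\alpha_1<\beta_2<\beta_3<\beta_4$. For $\Lambda\in\mathcal B$ and $n\ge1$, $C^{\Lambda}_n$ is the $n\times n$ tridiagonal matrix with diagonal $(a_n,a_{n-1},\dots,a_1)$, superdiagonal $(b_n,\dots,b_2)$ and all subdiagonal entries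 $1$, where $a_i=\alpha_1$ for odd $i$, $a_2=-\alpha_1+\alpha_2+\beta_2$, $a_i=\alpha_2$ for even $i>2$, $b_2=(\beta_2-\alpha_1)(\alpha_1-\alpha_2)$, $b_3=(\beta_3-\alpha_2)(\beta_3-\beta_2)$, $b_4=\frac{(\beta_4-\alpha_1)(\beta_3-\beta_4)(\alpha_2+\beta_2-\beta_3-\beta_4)}{\beta_4-\beta_2}$, and $b_i=(\beta_j-\alpha_1)(\beta_j-\alpha_2)$ for $i>4$ with $j\in\{2,3,4\}$, $i\equiv j\pmod 3$. (These $b_i$ are positive for $\Lambda\in\mathcal B$, so $C^\Lambda_n\in\mathcal R(P_n)$.) *)

theory Defs
  imports "Jordan_Normal_Form.Char_Poly"
begin

definition edges :: "nat \<Rightarrow> (nat \<Rightarrow> nat \<Rightarrow> bool) \<Rightarrow> nat set set" where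
  "edges n E = {{i, j} | i j. i < n \<and> j < n \<and> E i j}"

definition is_walk :: "(nat \<Rightarrow> nat \<Rightarrow> bool) \<Rightarrow> nat list \<Rightarrow> bool" where
  "is_walk E xs \<longleftrightarrow> xs \<noteq> [] \<and> (\<forall>i. Suc i < length xs \<longrightarrow> E (xs ! i) (xs ! Suc i))"

definition connected_by :: "(nat \<Rightarrow> nat \<Rightarrow> bool) \<Rightarrow> nat \<Rightarrow> nat \<Rightarrow> bool" where
  "connected_by E u v \<longleftrightarrow> (\<exists>xs. is_walk E xs \<and> hd xs = u \<and> last xs = v)"

definition gdist :: "(nat \<Rightarrow> nat \<Rightarrow> bool) \<Rightarrow> nat \<Rightarrow> nat \<Rightarrow> nat" where
  "gdist E u v = (LEAST k. \<exists>xs. is_walk E xs \<and> hd xs = u \<and> last xs = v \<and> length xs = Suc k)"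

definition is_tree :: "nat \<Rightarrow> (nat \<Rightarrow> nat \<Rightarrow> bool) \<Rightarrow> bool" where
  "is_tree n E \<longleftrightarrow> n \<ge> 1
     \<and> (\<forall>i j. E i j \<longrightarrow> i < n \<and> j < n \<and> i \<noteq> j \<and> E j i)
     \<and> (\<forall>i<n. \<forall>j<n. connected_by E i j)
     \<and> card (edges n E) = n - 1"

definition is_rooted_tree :: "nat \<Rightarrow> (nat \<Rightarrow> nat \<Rightarrow> bool) \<Rightarrow> nat \<Rightarrow> bool" where
  "is_rooted_tree n E r \<longleftrightarrow> is_tree n E \<and> r < n"

definition degree :: "(nat \<Rightarrow> nat \<Rightarrow> bool) \<Rightarrow> nat \<Rightarrow> nat" where
  "degree E v = card {j. E v j}"

text \<open>Leaf: non-root vertex of degree 1; in P_1 the single vertex is root and leaf.\<close>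
definition is_leaf :: "nat \<Rightarrow> (nat \<Rightarrow> nat \<Rightarrow> bool) \<Rightarrow> nat \<Rightarrow> nat \<Rightarrow> bool" where
  "is_leaf n E r v \<longleftrightarrow> v < n \<and> ((v \<noteq> r \<and> degree E v = 1) \<or> n = 1)"

text \<open>y is a child of the adjacent vertex z: the root-to-y path passes through z.\<close>
definition is_child :: "(nat \<Rightarrow> nat \<Rightarrow> bool) \<Rightarrow> nat \<Rightarrow> nat \<Rightarrow> nat \<Rightarrow> bool" where
  "is_child E r y z \<longleftrightarrow> E y z \<and> gdist E r y = gdist E r z + gdist E z y"

definition is_hedge :: "nat \<Rightarrow> (nat \<Rightarrow> nat \<Rightarrow> bool) \<Rightarrow> nat \<Rightarrow> bool" where
  "is_hedge n E r \<longleftrightarrow> is_rooted_tree n E r \<and>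
     (n = 1 \<or> (\<exists>d. \<forall>v. is_leaf n E r v \<longrightarrow> gdist E r v = d))"

definition vheight :: "nat \<Rightarrow> (nat \<Rightarrow> nat \<Rightarrow> bool) \<Rightarrow> nat \<Rightarrow> nat \<Rightarrow> nat" where
  "vheight n E r u = Min {gdist E u v | v. is_leaf n E r v}"

definition level_set :: "nat \<Rightarrow> (nat \<Rightarrow> nat \<Rightarrow> bool) \<Rightarrow> nat \<Rightarrow> nat \<Rightarrow> nat set" where
  "level_set n E r i = {v. v < n \<and> vheight n E r v = i}"

definition ell :: "nat \<Rightarrow> (nat \<Rightarrow> nat \<Rightarrow> bool) \<Rightarrow> nat \<Rightarrow> nat \<Rightarrow> int" where
  "ell n E r i = int (card (level_set n E r (i - 1))) - int (card (level_set n E r i))"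

definition in_R :: "nat \<Rightarrow> (nat \<Rightarrow> nat \<Rightarrow> bool) \<Rightarrow> real mat \<Rightarrow> bool" where
  "in_R n E A \<longleftrightarrow> A \<in> carrier_mat n n
     \<and> (\<forall>i<n. \<forall>j<n. i \<noteq> j \<longrightarrow> (A $$ (i, j) \<noteq> 0 \<longleftrightarrow> E i j))
     \<and> (\<forall>i<n. \<forall>j<n. E i j \<longrightarrow> A $$ (i, j) * A $$ (j, i) > 0)"

text \<open>Path-to-hedge class PH(C,T) for the hedge (n,E,r) of height H = vheight of r.
  C is indexed 0..H (0-based), so the paper's v' = H+1-h(v) becomes H - h(v).\<close>
definition PH :: "real mat \<Rightarrow> nat \<Rightarrow> (nat \<Rightarrow> nat \<Rightarrow> bool) \<Rightarrow> nat \<Rightarrow> real mat set" where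
  "PH C n E r = {A. in_R n E A \<and>
     (let H = vheight n E r r in
       (\<forall>v<n. A $$ (v, v) = C $$ (H - vheight n E r v, H - vheight n E r v))
     \<and> (\<forall>v<n. \<not> is_leaf n E r v \<longrightarrow>
          (\<Sum>u\<in>{u. u < n \<and> is_child E r u v}. A $$ (v, u) * A $$ (u, v))
            = C $$ (H - vheight n E r v, H - vheight n E r v + 1)
              * C $$ (H - vheight n E r v + 1, H - vheight n E r v)))}"

definition mult :: "real \<Rightarrow> real mat \<Rightarrow> nat" where
  "mult x A = order x (char_poly A)"

definition in_B :: "real \<Rightarrow> real \<Rightarrow> real \<Rightarrow> real \<Rightarrow> real \<Rightarrow> bool" where
  "in_B a1 a2 b2 b3 b4 \<longleftrightarrow> distinct [a1, a2, b2, b3, b4] \<and>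
    ( (b2 < a1 \<and> a1 < a2 \<and> a2 < b3 \<and> b3 < b4)
    \<or> (b2 < b4 \<and> b4 < a1 \<and> a1 < a2 \<and> a2 < b3)
    \<or> (b4 < b2 \<and> b2 < a1 \<and> a1 < a2 \<and> a2 < b3 \<and> a2 + b2 > b4 + b3)
    \<or> (b3 < b2 \<and> b2 < a1 \<and> a1 < a2 \<and> a2 < b4 \<and> a2 + b2 < b4 + b3)
    \<or> (b3 < b2 \<and> b2 < b4 \<and> b4 < a1 \<and> a1 < a2)
    \<or> (b4 < b3 \<and> b3 < b2 \<and> b2 < a1 \<and> a1 < a2)
    \<or> (b4 < b3 \<and> b3 < a2 \<and> a2 < a1 \<and> a1 < b2)
    \<or> (b3 < a2 \<and> a2 < a1 \<and> a1 < b4 \<and> b4 < b2)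
    \<or> (b3 < a2 \<and> a2 < a1 \<and> a1 < b2 \<and> b2 < b4 \<and> a2 + b2 < b4 + b3)
    \<or> (b4 < a2 \<and> a2 < a1 \<and> a1 < b2 \<and> b2 < b3 \<and> a2 + b2 > b4 + b3)
    \<or> (a2 < a1 \<and> a1 < b4 \<and> b4 < b2 \<and> b2 < b3)
    \<or> (a2 < a1 \<and> a1 < b2 \<and> b2 < b3 \<and> b3 < b4))"

definition coef_a :: "real \<Rightarrow> real \<Rightarrow> real \<Rightarrow> real \<Rightarrow> real \<Rightarrow> nat \<Rightarrow> real" where
  "coef_a a1 a2 b2 b3 b4 i =
     (if odd i then a1 else if i = 2 then - a1 + a2 + b2 else a2)"

definition coef_b :: "real \<Rightarrow> real \<Rightarrow> real \<Rightarrow> real \<Rightarrow> real \<Rightarrow> nat \<Rightarrow> real" where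
  "coef_b a1 a2 b2 b3 b4 i =
     (if i = 2 then (b2 - a1) * (a1 - a2)
      else if i = 3 then (b3 - a2) * (b3 - b2)
      else if i = 4 then (b4 - a1) * (b3 - b4) * (a2 + b2 - b3 - b4) / (b4 - b2)
      else (let bj = (if i mod 3 = 2 then b2 else if i mod 3 = 0 then b3 else b4)
            in (bj - a1) * (bj - a2)))"

text \<open>C^Lambda_n (0-based): diagonal (a_n,...,a_1), superdiagonal (b_n,...,b_2),
  subdiagonal all 1, zero elsewhere.\<close>
definition C_Lambda :: "real \<Rightarrow> real \<Rightarrow> real \<Rightarrow> real \<Rightarrow> real \<Rightarrow> nat \<Rightarrow> real mat" where
  "C_Lambda a1 a2 b2 b3 b4 n = mat n n (\<lambda>(k, l).
     if l = k then coef_a a1 a2 b2 b3 b4 (n - k)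
     else if l = k + 1 then coef_b a1 a2 b2 b3 b4 (n - k)
     else if k = l + 1 then 1
     else 0)"

end

theory Submission
  imports Defs
begin

text \<open>Let \<open>\<phi> k\<close> be the characteristic polynomial of the leading \<open>k \<times> k\<close> block of the path
  matrix \<open>C\<close>. Eliminating the tree from the leaves upwards factors \<open>x I - A = K R\<close> with \<open>K\<close>
  unipotent and \<open>R\<close> triangular for the tree order, the pivot at a vertex of height \<open>h\<close>
  being \<open>\<phi> (h + 1) x / \<phi> h x\<close>. Hence
  \<open>char_poly A * (\<Prod>v. \<phi> (h v)) = (\<Prod>v. \<phi> (h v + 1))\<close>, and since the \<open>\<phi> k\<close> have
  simple roots, summation by parts over the levels gives
  \<open>mult y A = (\<Sum>i. \<ell> i * [\<phi> i y = 0])\<close>. For \<open>C\<^sup>\<Lambda>\<close> the three-term recursion makes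
  the zeros of \<open>\<phi> k\<close> at \<open>\<alpha>\<^sub>1, \<alpha>\<^sub>2\<close> recur with period 2 in \<open>k\<close>, and those at
  \<open>\<beta>\<^sub>2, \<beta>\<^sub>3, \<beta>\<^sub>4\<close> with period 3.\<close>

lemma is_walk_take: "is_walk E xs \<Longrightarrow> 0 < k \<Longrightarrow> is_walk E (take k xs)"
  unfolding is_walk_def by auto

lemma is_walk_append_tl:
  assumes xs: "is_walk E xs" and ys: "is_walk E ys" and "last xs = hd ys"
  shows "is_walk E (xs @ tl ys)"
  unfolding is_walk_def
proof (intro conjI allI impI)
  show "xs @ tl ys \<noteq> []" using xs by (simp add: is_walk_def)
  fix i assume i: "Suc i < length (xs @ tl ys)"
  have "xs \<noteq> []" "ys \<noteq> []" using xs ys by (auto simp: is_walk_def)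
  consider "Suc i < length xs" | "Suc i = length xs" | "length xs \<le> i" by linarith
  then show "E ((xs @ tl ys) ! i) ((xs @ tl ys) ! Suc i)"
  proof cases
    case 1 then show ?thesis using xs by (simp add: nth_append is_walk_def)
  next
    case 2
    then have "i = length xs - 1" by simp
    then have "xs ! i = ys ! 0" "(xs @ tl ys) ! Suc i = ys ! 1" "Suc 0 < length ys"
      using i \<open>last xs = hd ys\<close> \<open>xs \<noteq> []\<close> \<open>ys \<noteq> []\<close>
      by (auto simp: nth_append nth_tl last_conv_nth hd_conv_nth)
    then show ?thesis using ys 2 unfolding is_walk_def by (simp add: nth_append)
  next
    case 3
    then have "(xs @ tl ys) ! i = ys ! Suc (i - length xs)"
      "(xs @ tl ys) ! Suc i = ys ! Suc (Suc (i - length xs))"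
      "Suc (Suc (i - length xs)) < length ys"
      using i by (auto simp: nth_append nth_tl Suc_diff_le)
    then show ?thesis using ys unfolding is_walk_def by simp
  qed
qed

lemma shortest_walk_exists:
  assumes "connected_by E u v"
  shows "\<exists>xs. is_walk E xs \<and> hd xs = u \<and> last xs = v \<and> length xs = Suc (gdist E u v)"
proof -
  obtain xs where xs: "is_walk E xs" "hd xs = u" "last xs = v"
    using assms unfolding connected_by_def by blast
  then have "length xs = Suc (length xs - 1)" by (cases xs) (auto simp: is_walk_def)
  with xs have "\<exists>k xs. is_walk E xs \<and> hd xs = u \<and> last xs = v \<and> length xs = Suc k" by blast
  then show ?thesis unfolding gdist_def by (rule LeastI_ex)
qed

lemma gdist_le_walk:
  assumes "is_walk E xs" "hd xs = u" "last xs = v"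
  shows "gdist E u v \<le> length xs - 1"
proof -
  have "length xs = Suc (length xs - 1)" using assms by (cases xs) (auto simp: is_walk_def)
  with assms show ?thesis unfolding gdist_def by (intro Least_le) blast
qed

lemma gdist_self [simp]: "gdist E u u = 0"
  using gdist_le_walk[of E "[u]" u u] by (simp add: is_walk_def)

lemma gdist_edge_le: "E u v \<Longrightarrow> gdist E u v \<le> 1"
  using gdist_le_walk[of E "[u,v]" u v] by (simp add: is_walk_def)

lemma gdist_triangle:
  assumes "connected_by E u v" "connected_by E v w"
  shows "gdist E u w \<le> gdist E u v + gdist E v w"
proof -
  obtain xs where xs: "is_walk E xs" "hd xs = u" "last xs = v" "length xs = Suc (gdist E u v)"
    using shortest_walk_exists[OF assms(1)] by blast
  obtain ys where ys: "is_walk E ys" "hd ys = v" "last ys = w" "length ys = Suc (gdist E v w)"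
    using shortest_walk_exists[OF assms(2)] by blast
  have "last (xs @ tl ys) = w"
    using xs ys by (cases ys; cases "tl ys") (auto simp: last_append)
  moreover have "hd (xs @ tl ys) = u" using xs by (cases xs) auto
  ultimately show ?thesis
    using gdist_le_walk[OF is_walk_append_tl[OF xs(1) ys(1)]] xs ys by simp
qed

lemma gdist_pos:
  assumes "connected_by E u v" "u \<noteq> v"
  shows "1 \<le> gdist E u v"
proof (rule ccontr)
  assume "\<not> 1 \<le> gdist E u v"
  moreover obtain xs where "is_walk E xs" "hd xs = u" "last xs = v" "length xs = Suc (gdist E u v)"
    using shortest_walk_exists[OF assms(1)] by blast
  ultimately have "length xs = 1" "hd xs = u" "last xs = v" by auto
  then show False using assms(2) by (cases xs) auto
qed

locale hedge =
  fixes n :: nat and E :: "nat \<Rightarrow> nat \<Rightarrow> bool" and r :: nat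
  assumes is_hedge: "is_hedge n E r"
begin

abbreviation depth :: "nat \<Rightarrow> nat" where "depth v \<equiv> gdist E r v"

abbreviation ht :: "nat \<Rightarrow> nat" where "ht v \<equiv> vheight n E r v"

lemma root_less: "r < n"
  using is_hedge unfolding is_hedge_def is_rooted_tree_def by blast

lemma edge_sym: "E i j \<Longrightarrow> i < n \<and> j < n \<and> i \<noteq> j \<and> E j i"
  using is_hedge unfolding is_hedge_def is_rooted_tree_def is_tree_def by blast

lemma connected: "i < n \<Longrightarrow> j < n \<Longrightarrow> connected_by E i j"
  using is_hedge unfolding is_hedge_def is_rooted_tree_def is_tree_def by blast

lemma card_edges: "card (edges n E) = n - 1"
  using is_hedge unfolding is_hedge_def is_rooted_tree_def is_tree_def by blast

lemma gdist_edge: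
  assumes "E u v" shows "gdist E u v = 1"
proof -
  have "u < n" "v < n" "u \<noteq> v" using edge_sym[OF assms] by auto
  then have "1 \<le> gdist E u v" using gdist_pos connected by blast
  with gdist_edge_le[of E, OF assms] show ?thesis by simp
qed

lemma depth_edge_le:
  assumes "E u v" shows "depth v \<le> depth u + 1"
proof -
  have "u < n" "v < n" using edge_sym[OF assms] by auto
  then have "depth v \<le> depth u + gdist E u v"
    using gdist_triangle connected root_less by blast
  then show ?thesis using gdist_edge[OF assms] by simp
qed

lemma parent_exists:
  assumes v: "v < n" "v \<noteq> r"
  shows "\<exists>p. E p v \<and> depth p + 1 = depth v"
proof -
  obtain xs where xs: "is_walk E xs" "hd xs = r" "last xs = v" "length xs = Suc (depth v)"
    using shortest_walk_exists[OF connected[OF root_less v(1)]] by blast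
  define k where "k = depth v"
  have k: "1 \<le> k" using gdist_pos[OF connected[OF root_less v(1)]] v unfolding k_def by auto
  have len: "length xs = Suc k" and ne: "xs \<noteq> []" using xs(4) unfolding k_def by auto
  let ?p = "xs ! (k - 1)"
  have "Suc (k - 1) < length xs" using k len by simp
  then have "E ?p (xs ! Suc (k - 1))" using xs(1) unfolding is_walk_def by blast
  moreover have "xs ! k = v" using xs(3) last_conv_nth[OF ne] len by simp
  ultimately have edge: "E ?p v" using k by simp
  have "hd (take k xs) = r" using xs(2) k by (cases xs) auto
  moreover have "last (take k xs) = ?p" using ne len k by (simp add: last_conv_nth)
  ultimately have "depth ?p \<le> k - 1"
    using gdist_le_walk[OF is_walk_take[OF xs(1)], of k] k len by simp
  then have "depth ?p + 1 = depth v"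
    using depth_edge_le[OF edge] k unfolding k_def by linarith
  with edge show ?thesis by blast
qed

definition parent :: "nat \<Rightarrow> nat" where
  "parent v = (SOME p. E p v \<and> depth p + 1 = depth v)"

lemma parent: "v < n \<Longrightarrow> v \<noteq> r \<Longrightarrow> E (parent v) v \<and> depth (parent v) + 1 = depth v"
  unfolding parent_def using parent_exists by (rule someI_ex)

lemma parent_less: "v < n \<Longrightarrow> v \<noteq> r \<Longrightarrow> parent v < n"
  using parent edge_sym by blast

text \<open>Counting edges: the \<open>n - 1\<close> edges \<open>{v, parent v}\<close> already exhaust the tree.\<close>
lemma edge_parent_cases:
  assumes "E i j"
  shows "(i \<noteq> r \<and> j = parent i) \<or> (j \<noteq> r \<and> i = parent j)"
proof -
  define S where "S = {..<n} - {r}"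
  define f where "f v = {v, parent v}" for v
  have "inj_on f S"
  proof
    fix v w assume "v \<in> S" "w \<in> S" "f v = f w"
    moreover have "depth (parent v) + 1 = depth v" "depth (parent w) + 1 = depth w"
      using parent \<open>v \<in> S\<close> \<open>w \<in> S\<close> unfolding S_def by auto
    ultimately show "v = w" unfolding f_def by (auto simp: doubleton_eq_iff)
  qed
  then have "card (f ` S) = card (edges n E)"
    using card_image[of f S] card_edges root_less unfolding S_def by simp
  moreover have "f ` S \<subseteq> edges n E"
  proof
    fix e assume "e \<in> f ` S"
    then obtain v where "v \<in> S" "e = {v, parent v}" unfolding f_def by blast
    moreover have "E v (parent v)" using parent[of v] edge_sym \<open>v \<in> S\<close> unfolding S_def by blast
    ultimately show "e \<in> edges n E" unfolding edges_def using edge_sym by blast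
  qed
  moreover have "finite (edges n E)"
    by (rule finite_subset[of _ "Pow {..<n}"]) (auto simp: edges_def)
  ultimately have "f ` S = edges n E" by (simp add: card_subset_eq)
  moreover have "{i, j} \<in> edges n E" unfolding edges_def using assms edge_sym by blast
  ultimately obtain v where "v \<in> S" "{i, j} = {v, parent v}" unfolding f_def by auto
  then show ?thesis unfolding S_def by (auto simp: doubleton_eq_iff)
qed

lemma edge_depth_cases: "E i j \<Longrightarrow> depth j = depth i + 1 \<or> depth i = depth j + 1"
  using edge_parent_cases[of i j] edge_sym[of i j] parent[of i] parent[of j] by auto

lemma parent_iff: "E u v \<and> depth u = depth v + 1 \<longleftrightarrow> u < n \<and> u \<noteq> r \<and> v = parent u"
proof
  assume "E u v \<and> depth u = depth v + 1"
  then show "u < n \<and> u \<noteq> r \<and> v = parent u"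
    using edge_parent_cases[of u v] edge_sym[of u v] parent[of v] by auto
next
  assume "u < n \<and> u \<noteq> r \<and> v = parent u"
  then show "E u v \<and> depth u = depth v + 1" using parent[of u] edge_sym by auto
qed

lemma is_child_iff: "is_child E r u v \<longleftrightarrow> E u v \<and> depth u = depth v + 1"
  unfolding is_child_def using gdist_edge[of u v] gdist_edge[of v u] edge_sym[of u v] by auto

lemma leaf_if_no_child:
  assumes v: "v < n" and no_child: "\<not> (\<exists>c. E c v \<and> depth c = depth v + 1)"
  shows "is_leaf n E r v"
proof (cases "n = 1")
  case True then show ?thesis using v unfolding is_leaf_def by simp
next
  case n: False
  show ?thesis
  proof (cases "v = r")
    case True
    define j :: nat where "j = (if r = 0 then 1 else 0)"
    have j: "j < n" "j \<noteq> r" using n root_less unfolding j_def by auto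
    obtain xs where xs: "is_walk E xs" "hd xs = r" "last xs = j" "length xs = Suc (depth j)"
      using shortest_walk_exists[OF connected[OF root_less j(1)]] by blast
    have "1 \<le> depth j" using gdist_pos[OF connected[OF root_less j(1)]] j by auto
    then have "Suc 0 < length xs" using xs by simp
    then have "E (xs ! 0) (xs ! 1)" "xs ! 0 = r" using xs(1,2) unfolding is_walk_def
      by (auto simp: hd_conv_nth)
    then have "E (xs ! 1) r \<and> depth (xs ! 1) = depth r + 1"
      using edge_depth_cases[of r "xs ! 1"] edge_sym[of r "xs ! 1"] by auto
    then show ?thesis using no_child True by blast
  next
    case False
    have "{j. E v j} = {parent v}"
    proof (intro equalityI subsetI)
      fix j assume "j \<in> {j. E v j}"
      then have "E v j" by simp
      moreover have "\<not> (j \<noteq> r \<and> v = parent j)"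
        using parent[of j] edge_sym[OF \<open>E v j\<close>] no_child by auto
      ultimately show "j \<in> {parent v}" using edge_parent_cases by blast
    qed (use parent[OF v False] edge_sym in blast)
    then show ?thesis unfolding is_leaf_def degree_def using v False by simp
  qed
qed

lemma leaf_below: "v < n \<Longrightarrow> \<exists>l. is_leaf n E r l \<and> depth v + gdist E v l \<le> depth l"
proof -
  define M where "M = Max (depth ` {..<n})"
  have depth_le_M: "depth w \<le> M" if "w < n" for w unfolding M_def using that by simp
  show "v < n \<Longrightarrow> ?thesis"
  proof (induction "M - depth v" arbitrary: v rule: less_induct)
    case less
    show ?case
    proof (cases "\<exists>c. E c v \<and> depth c = depth v + 1")
      case True
      then obtain c where c: "E c v" "depth c = depth v + 1" by blast
      have "c < n" using edge_sym[OF c(1)] by simp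
      then have "M - depth c < M - depth v" using depth_le_M c(2) by fastforce
      then obtain l where l: "is_leaf n E r l" "depth c + gdist E c l \<le> depth l"
        using less.hyps \<open>c < n\<close> by blast
      have "l < n" using l(1) unfolding is_leaf_def by simp
      then have "gdist E v l \<le> gdist E v c + gdist E c l"
        using gdist_triangle connected less.prems \<open>c < n\<close> by blast
      then show ?thesis using l c gdist_edge[of v c] edge_sym[OF c(1)] by auto
    next
      case False
      then have "is_leaf n E r v" using leaf_if_no_child less.prems by blast
      then show ?thesis by (intro exI[of _ v]) simp
    qed
  qed
qed

definition leaf_depth :: nat where
  "leaf_depth = (SOME d. \<forall>l. is_leaf n E r l \<longrightarrow> depth l = d)"

lemma depth_leaf: "is_leaf n E r l \<Longrightarrow> depth l = leaf_depth"
proof -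
  have "\<exists>d. \<forall>l. is_leaf n E r l \<longrightarrow> depth l = d"
  proof (cases "n = 1")
    case True
    then have "is_leaf n E r l \<Longrightarrow> depth l = 0" for l
      using root_less unfolding is_leaf_def by auto
    then show ?thesis by blast
  qed (use is_hedge in \<open>auto simp: is_hedge_def\<close>)
  then have "\<forall>l. is_leaf n E r l \<longrightarrow> depth l = leaf_depth"
    unfolding leaf_depth_def by (rule someI_ex)
  then show "is_leaf n E r l \<Longrightarrow> depth l = leaf_depth" by blast
qed

lemma depth_le_leaf_depth: "v < n \<Longrightarrow> depth v \<le> leaf_depth"
  using leaf_below depth_leaf by (metis le_add1 order_trans)

lemma vheight_eq: assumes v: "v < n" shows "ht v = leaf_depth - depth v"
proof -
  let ?S = "{gdist E v l | l. is_leaf n E r l}"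
  obtain l where l: "is_leaf n E r l" "depth v + gdist E v l \<le> depth l"
    using leaf_below v by blast
  have lower: "leaf_depth - depth v \<le> gdist E v l'" if "is_leaf n E r l'" for l'
  proof -
    have "l' < n" using that unfolding is_leaf_def by simp
    then have "depth l' \<le> depth v + gdist E v l'" using gdist_triangle connected root_less v by blast
    then show ?thesis using depth_leaf[OF that] by simp
  qed
  have "gdist E v l = leaf_depth - depth v" using lower[OF l(1)] l depth_leaf[OF l(1)] by simp
  moreover have "finite ?S"
    by (rule finite_subset[of _ "gdist E v ` {..<n}"]) (auto simp: is_leaf_def)
  ultimately have "Min ?S = leaf_depth - depth v"
    using lower l(1) by (intro Min_eqI) (auto intro!: exI[of _ l])
  then show ?thesis unfolding vheight_def by simp
qed

lemma vheight_root: "ht r = leaf_depth"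
  using vheight_eq[OF root_less] by simp

lemma vheight_le_root: "v < n \<Longrightarrow> ht v \<le> ht r"
  using vheight_eq vheight_root by simp

lemma vheight_leaf: "is_leaf n E r v \<Longrightarrow> ht v = 0"
  using vheight_eq depth_leaf unfolding is_leaf_def by auto

lemma vheight_pos_if_not_leaf:
  assumes "v < n" "\<not> is_leaf n E r v" shows "1 \<le> ht v"
proof -
  obtain c where c: "E c v" "depth c = depth v + 1" using leaf_if_no_child assms by blast
  then have "depth c \<le> leaf_depth" using depth_le_leaf_depth edge_sym by blast
  then show ?thesis using vheight_eq[OF assms(1)] c(2) by simp
qed

lemma vheight_parent:
  assumes "v < n" "v \<noteq> r" shows "ht (parent v) = ht v + 1"
  using vheight_eq[OF assms(1)] vheight_eq[OF parent_less[OF assms]] parent[OF assms]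
    depth_le_leaf_depth[OF assms(1)] by linarith

definition children :: "nat \<Rightarrow> nat set" where
  "children v = {u. u < n \<and> u \<noteq> r \<and> parent u = v}"

lemma children_eq: "{u. u < n \<and> is_child E r u v} = children v"
  unfolding children_def is_child_iff parent_iff by blast

lemma vheight_child: "u \<in> children v \<Longrightarrow> ht v = ht u + 1"
  unfolding children_def using vheight_parent by blast

lemma children_of_leaf: "is_leaf n E r v \<Longrightarrow> children v = {}"
  using vheight_leaf vheight_child by fastforce

end

text \<open>\<open>jacobi_poly a b k\<close> is the characteristic polynomial of the leading \<open>k \<times> k\<close> block of a
  tridiagonal matrix with diagonal \<open>a 1, a 2, \<dots>\<close> and products of opposite off-diagonal entries
  \<open>b 2, b 3, \<dots>\<close>.\<close>
fun jacobi_poly :: "(nat \<Rightarrow> real) \<Rightarrow> (nat \<Rightarrow> real) \<Rightarrow> nat \<Rightarrow> real poly" where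
  "jacobi_poly a b 0 = 1"
| "jacobi_poly a b (Suc 0) = [:- a 1, 1:]"
| "jacobi_poly a b (Suc (Suc k)) =
     [:- a (k + 2), 1:] * jacobi_poly a b (Suc k) - Polynomial.smult (b (k + 2)) (jacobi_poly a b k)"

text \<open>At symbolic indices such as \<open>k + 3\<close> the simplifier would unfold the whole recursion.\<close>
declare jacobi_poly.simps(3) [simp del]

lemma poly_jacobi_poly_Suc_Suc:
  "poly (jacobi_poly a b (Suc (Suc k))) x
     = (x - a (k + 2)) * poly (jacobi_poly a b (Suc k)) x - b (k + 2) * poly (jacobi_poly a b k) x"
  by (simp add: jacobi_poly.simps(3) algebra_simps)

text \<open>Christoffel--Darboux: the Wronskian \<open>W k = \<phi>' (k + 1) * \<phi> k - \<phi> (k + 1) * \<phi>' k\<close>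
  satisfies \<open>W (k + 1) = \<phi> (k + 1)\<^sup>2 + b (k + 2) * W k\<close>.\<close>
lemma jacobi_wronskian_pos:
  assumes b_pos: "\<And>i. 2 \<le> i \<Longrightarrow> b i > 0"
  shows "poly (pderiv (jacobi_poly a b (Suc k))) x * poly (jacobi_poly a b k) x
       - poly (jacobi_poly a b (Suc k)) x * poly (pderiv (jacobi_poly a b k)) x > 0"
proof (induction k)
  case 0 then show ?case by (simp add: pderiv_pCons)
next
  case (Suc k)
  let ?p = "jacobi_poly a b"
  have d: "pderiv (?p (Suc (Suc k)))
      = ?p (Suc k) + [:- a (k + 2), 1:] * pderiv (?p (Suc k)) - Polynomial.smult (b (k + 2)) (pderiv (?p k))"
    by (simp add: pderiv_diff pderiv_mult pderiv_smult pderiv_pCons pderiv_add jacobi_poly.simps(3) algebra_simps)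
  have "poly (pderiv (?p (Suc (Suc k)))) x * poly (?p (Suc k)) x
      - poly (?p (Suc (Suc k))) x * poly (pderiv (?p (Suc k))) x
      = (poly (?p (Suc k)) x)\<^sup>2 + b (k + 2) * (poly (pderiv (?p (Suc k))) x * poly (?p k) x
      - poly (?p (Suc k)) x * poly (pderiv (?p k)) x)"
    unfolding d by (simp add: jacobi_poly.simps(3) algebra_simps power2_eq_square)
  moreover have "b (k + 2) > 0" using b_pos by simp
  ultimately show ?case using Suc.IH by (simp add: add_nonneg_pos)
qed

lemma jacobi_poly_nonzero:
  assumes "\<And>i. 2 \<le> i \<Longrightarrow> b i > 0"
  shows "jacobi_poly a b k \<noteq> 0"
proof (cases k)
  case (Suc j)
  then show ?thesis using jacobi_wronskian_pos[where a = a and b = b and k = j and x = 0, OF assms] by auto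
qed simp

text \<open>At a root of \<open>\<phi> k\<close> the Wronskian reduces to \<open>\<phi>' k * \<phi> (k - 1) > 0\<close>, so the root
  is simple.\<close>
lemma order_jacobi_poly:
  assumes b_pos: "\<And>i. 2 \<le> i \<Longrightarrow> b i > 0"
  shows "order x (jacobi_poly a b k) = (if poly (jacobi_poly a b k) x = 0 then 1 else 0)"
proof (cases "poly (jacobi_poly a b k) x = 0")
  case True
  then obtain j where k: "k = Suc j" by (cases k) auto
  have "poly (pderiv (jacobi_poly a b k)) x \<noteq> 0"
    using jacobi_wronskian_pos[where a = a and b = b and k = j and x = x, OF b_pos] True unfolding k by auto
  then have "order x (pderiv (jacobi_poly a b k)) = 0" by (rule order_0I)
  then show ?thesis
    using order_pderiv[OF _ True] jacobi_poly_nonzero[OF b_pos] True by simp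
qed (simp add: order_0I)

lemma jacobi_ratio_recurrence:
  assumes "poly (jacobi_poly a b (Suc k)) x \<noteq> 0" "poly (jacobi_poly a b k) x \<noteq> 0"
  shows "poly (jacobi_poly a b (Suc (Suc k))) x / poly (jacobi_poly a b (Suc k)) x
       = x - a (k + 2) - b (k + 2) / (poly (jacobi_poly a b (Suc k)) x / poly (jacobi_poly a b k) x)"
proof -
  have "\<And>p1 p0 :: real. p1 \<noteq> 0 \<Longrightarrow> p0 \<noteq> 0 \<Longrightarrow>
      ((x - a (k + 2)) * p1 - b (k + 2) * p0) / p1 = x - a (k + 2) - b (k + 2) / (p1 / p0)"
    by (simp add: field_simps)
  then show ?thesis using assms by (simp only: poly_jacobi_poly_Suc_Suc)
qed

lemma poly_eq_if_eq_outside_finite: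
  fixes p q :: "real poly"
  assumes "finite Z" and "\<And>x. x \<notin> Z \<Longrightarrow> poly p x = poly q x"
  shows "p = q"
proof (rule ccontr)
  assume "p \<noteq> q"
  then have "finite {x. poly (p - q) x = 0}" by (intro poly_roots_finite) simp
  moreover have "UNIV - Z \<subseteq> {x. poly (p - q) x = 0}" using assms(2) by auto
  ultimately have "finite (UNIV - Z)" by (rule finite_subset[rotated])
  then show False using assms(1) infinite_UNIV_char_0[where 'a = real] by simp
qed

lemma order_prod:
  fixes f :: "'i \<Rightarrow> 'a::idom poly"
  assumes "finite S" and "\<And>i. i \<in> S \<Longrightarrow> f i \<noteq> 0"
  shows "order x (\<Prod>i\<in>S. f i) = (\<Sum>i\<in>S. order x (f i))"
  using assms
proof (induction S rule: finite_induct)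
  case (insert i S)
  then have "(\<Prod>i\<in>S. f i) \<noteq> 0" "f i \<noteq> 0" by auto
  then show ?case using insert by (simp add: order_mult)
qed simp

lemma summation_by_parts:
  fixes f c :: "nat \<Rightarrow> 'a::comm_ring"
  shows "(\<Sum>i = 1..m. f i * (c (i - 1) - c i))
       = (\<Sum>k < m. c k * (f (Suc k) - f k)) + f 0 * c 0 - f m * c m"
  by (induction m) (simp_all add: algebra_simps)

lemma zeros_periodic:
  fixes Z :: "nat \<Rightarrow> bool"
  assumes p: "0 < p" and below: "\<And>k. k < j \<Longrightarrow> \<not> Z k"
    and period: "\<And>q s. s < p \<Longrightarrow> Z (j + p * q + s) \<longleftrightarrow> s = 0"
  shows "Z k \<longleftrightarrow> j \<le> k \<and> k mod p = j mod p"
proof (cases "j \<le> k")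
  case True
  define q s where "q = (k - j) div p" and "s = (k - j) mod p"
  have k: "k = j + p * q + s" using True unfolding q_def s_def by simp
  have "s < p" using p unfolding s_def by simp
  have "k mod p = j mod p \<longleftrightarrow> p dvd (k - j)" using True mod_eq_dvd_iff_nat by blast
  also have "\<dots> \<longleftrightarrow> s = 0" unfolding s_def by (simp add: dvd_eq_mod_eq_0)
  finally show ?thesis using period[OF \<open>s < p\<close>, of q] k True by simp
qed (use below in simp)

lemma det_eq_prod_diag_if_graded:
  fixes B :: "'a::comm_ring_1 mat" and f :: "nat \<Rightarrow> nat"
  assumes B: "B \<in> carrier_mat n n"
    and graded: "\<And>i j. i < n \<Longrightarrow> j < n \<Longrightarrow> i \<noteq> j \<Longrightarrow> B $$ (i, j) \<noteq> 0 \<Longrightarrow> f j < f i"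
  shows "det B = (\<Prod>i = 0..<n. B $$ (i, i))"
proof -
  text \<open>A permutation contributing a non-zero term cannot raise \<open>f\<close> anywhere, yet it
    preserves the sum of \<open>f\<close>; so it cannot lower \<open>f\<close> anywhere either.\<close>
  have only_id: "p = id" if p: "p permutes {0..<n}" and nz: "(\<Prod>i = 0..<n. B $$ (i, p i)) \<noteq> 0" for p
  proof -
    have entry: "B $$ (i, p i) \<noteq> 0" "p i < n" if "i < n" for i
    proof
      assume "B $$ (i, p i) = 0"
      then have "(\<Prod>i = 0..<n. B $$ (i, p i)) = 0" using that by (intro prod_zero) auto
      with nz show False by simp
    qed (use that permutes_in_image[OF p] in simp)
    have le: "f (p i) \<le> f i" if "i < n" for i
      using graded[OF that entry(2)[OF that] _ entry(1)[OF that]] by (cases "p i = i") auto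
    have fixed: "p i = i" if i: "i < n" for i
    proof (rule ccontr)
      assume "p i \<noteq> i"
      then have "f (p i) < f i" using graded[OF i entry(2)[OF i] _ entry(1)[OF i]] by simp
      then have "(\<Sum>i = 0..<n. f (p i)) < (\<Sum>i = 0..<n. f i)"
        using le i by (intro sum_strict_mono_ex1) auto
      with sum.permute[OF p, of f] show False by simp
    qed
    show "p = id"
    proof
      fix i show "p i = id i" using fixed permutes_not_in[OF p] by (cases "i < n") auto
    qed
  qed
  let ?term = "\<lambda>p. signof p * (\<Prod>i = 0..<n. B $$ (i, p i))"
  have "det B = (\<Sum>p \<in> {p. p permutes {0..<n}}. ?term p)" using B unfolding det_def by auto
  also have "\<dots> = ?term id + (\<Sum>p \<in> {p. p permutes {0..<n}} - {id}. ?term p)"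
    by (rule sum.remove) (auto simp: finite_permutations permutes_id)
  also have "(\<Sum>p \<in> {p. p permutes {0..<n}} - {id}. ?term p) = 0"
    using only_id by (intro sum.neutral) (metis DiffE insertI1 mem_Collect_eq mult_zero_right)
  finally show ?thesis by (simp add: sign_id)
qed

context hedge
begin

text \<open>The class \<open>PH(C, T)\<close> for the tridiagonal \<open>C\<close> whose diagonal entries and products of
  opposite off-diagonal entries are \<open>a\<close> and \<open>b\<close>, read off at index \<open>height + 1\<close>.\<close>
definition path_to_hedge :: "(nat \<Rightarrow> real) \<Rightarrow> (nat \<Rightarrow> real) \<Rightarrow> real mat \<Rightarrow> bool" where
  "path_to_hedge a b A \<longleftrightarrow> A \<in> carrier_mat n n
     \<and> (\<forall>i<n. \<forall>j<n. i \<noteq> j \<longrightarrow> A $$ (i, j) \<noteq> 0 \<longrightarrow> E i j)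
     \<and> (\<forall>v<n. A $$ (v, v) = a (ht v + 1))
     \<and> (\<forall>v<n. \<not> is_leaf n E r v \<longrightarrow> (\<Sum>u\<in>children v. A $$ (v, u) * A $$ (u, v)) = b (ht v + 1))"

text \<open>The two factors of \<open>x I - A = K R\<close>, eliminating the tree from the leaves upwards;
  \<open>d\<close> gives the pivots, which depend on the height only.\<close>
definition children_factor :: "real mat \<Rightarrow> (nat \<Rightarrow> real) \<Rightarrow> real mat" where
  "children_factor A d = mat n n (\<lambda>(i, j).
     if j = i then 1 else if j \<in> children i then - A $$ (i, j) / d (ht j) else 0)"

definition parent_factor :: "real mat \<Rightarrow> (nat \<Rightarrow> real) \<Rightarrow> real mat" where
  "parent_factor A d = mat n n (\<lambda>(i, j).
     if j = i then d (ht i) else if i \<noteq> r \<and> j = parent i then - A $$ (i, j) else 0)"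

lemma det_children_factor: "det (children_factor A d) = 1"
proof -
  have "det (children_factor A d) = (\<Prod>i = 0..<n. children_factor A d $$ (i, i))"
  proof (rule det_eq_prod_diag_if_graded[where f = ht])
    fix i j assume "i < n" "j < n" "i \<noteq> j" "children_factor A d $$ (i, j) \<noteq> 0"
    then have "j \<in> children i" unfolding children_factor_def by (auto split: if_splits)
    then show "ht j < ht i" using vheight_child by simp
  qed (simp add: children_factor_def)
  then show ?thesis unfolding children_factor_def by simp
qed

lemma det_parent_factor: "det (parent_factor A d) = (\<Prod>i = 0..<n. d (ht i))"
proof -
  have "det (parent_factor A d) = (\<Prod>i = 0..<n. parent_factor A d $$ (i, i))"
  proof (rule det_eq_prod_diag_if_graded[where f = "\<lambda>j. ht r - ht j"])
    fix i j assume ij: "i < n" "j < n" "i \<noteq> j" "parent_factor A d $$ (i, j) \<noteq> 0"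
    then have "i \<noteq> r" "j = parent i" unfolding parent_factor_def by (auto split: if_splits)
    then show "ht r - ht j < ht r - ht i"
      using vheight_parent vheight_le_root parent_less ij by fastforce
  qed (simp add: parent_factor_def)
  then show ?thesis unfolding parent_factor_def by simp
qed

lemma children_factor_mult_parent_factor_entry:
  assumes "i < n" "j < n"
  shows "(children_factor A d * parent_factor A d) $$ (i, j)
       = parent_factor A d $$ (i, j)
         + (\<Sum>k\<in>children i. - A $$ (i, k) / d (ht k) * parent_factor A d $$ (k, j))"
proof -
  let ?R = "parent_factor A d" and ?c = "\<lambda>k. - A $$ (i, k) / d (ht k)"
  have "i \<notin> children i" using vheight_child by fastforce
  then have "(\<Sum>k = 0..<n. children_factor A d $$ (i, k) * ?R $$ (k, j))
      = (\<Sum>k = 0..<n. (if k = i then ?R $$ (k, j) else 0)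
                      + (if k \<in> children i then ?c k * ?R $$ (k, j) else 0))"
    using assms by (intro sum.cong) (auto simp: children_factor_def children_def)
  also have "\<dots> = ?R $$ (i, j) + (\<Sum>k \<in> {0..<n} \<inter> children i. ?c k * ?R $$ (k, j))"
    using assms unfolding sum.distrib sum.inter_restrict[OF finite_atLeastLessThan] by simp
  also have "{0..<n} \<inter> children i = children i" unfolding children_def by auto
  finally show ?thesis using assms by (simp add: children_factor_def parent_factor_def scalar_prod_def)
qed

lemma finite_children [simp]: "finite (children v)"
  unfolding children_def by simp

lemma path_to_hedgeD:
  assumes "path_to_hedge a b A"
  shows "A \<in> carrier_mat n n"
    and "\<And>i j. i < n \<Longrightarrow> j < n \<Longrightarrow> i \<noteq> j \<Longrightarrow> A $$ (i, j) \<noteq> 0 \<Longrightarrow> E i j"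
    and "\<And>v. v < n \<Longrightarrow> A $$ (v, v) = a (ht v + 1)"
    and "\<And>v. v < n \<Longrightarrow> \<not> is_leaf n E r v \<Longrightarrow>
           (\<Sum>u\<in>children v. A $$ (v, u) * A $$ (u, v)) = b (ht v + 1)"
  using assms unfolding path_to_hedge_def by auto

lemma parent_factor_child_row:
  assumes "k \<in> children i" "j < n"
  shows "parent_factor A d $$ (k, j) = (if j = k then d (ht k) else if j = i then - A $$ (k, i) else 0)"
  using assms unfolding children_def parent_factor_def by auto

lemma children_factor_mult_parent_factor_child:
  assumes d_nz: "\<And>k. k < ht r \<Longrightarrow> d k \<noteq> 0" and i: "i < n" and child: "j \<in> children i"
  shows "(children_factor A d * parent_factor A d) $$ (i, j) = - A $$ (i, j)"
proof -
  have j: "j < n" "j \<noteq> i" and ht_j: "ht i = ht j + 1"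
    using child vheight_child[OF child] unfolding children_def by auto
  have "(\<Sum>k\<in>children i. - A $$ (i, k) / d (ht k) * parent_factor A d $$ (k, j))
      = (\<Sum>k\<in>children i. if k = j then - A $$ (i, k) / d (ht k) * d (ht k) else 0)"
    using parent_factor_child_row j by (intro sum.cong) auto
  also have "\<dots> = - A $$ (i, j)" using child d_nz vheight_le_root[OF i] ht_j by simp
  finally have "(\<Sum>k\<in>children i. - A $$ (i, k) / d (ht k) * parent_factor A d $$ (k, j)) = - A $$ (i, j)" .
  moreover have "\<not> (i \<noteq> r \<and> j = parent i)" using ht_j vheight_parent[OF i] by auto
  then have "parent_factor A d $$ (i, j) = 0" using i j unfolding parent_factor_def by auto
  ultimately show ?thesis using children_factor_mult_parent_factor_entry[OF i j(1), of A d] by simp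
qed

lemma children_factor_mult_parent_factor_diag:
  assumes A: "path_to_hedge a b A"
    and d_leaf: "d 0 = x - a 1"
    and d_rec: "\<And>k. 1 \<le> k \<Longrightarrow> k \<le> ht r \<Longrightarrow> d k = x - a (k + 1) - b (k + 1) / d (k - 1)"
    and i: "i < n"
  shows "(children_factor A d * parent_factor A d) $$ (i, i) = x - A $$ (i, i)"
proof (cases "is_leaf n E r i")
  case True
  then show ?thesis
    using children_factor_mult_parent_factor_entry[OF i i] children_of_leaf vheight_leaf d_leaf
      path_to_hedgeD(3)[OF A i] i
    unfolding parent_factor_def by simp
next
  case False
  have "- A $$ (i, k) / d (ht k) * parent_factor A d $$ (k, i) = A $$ (i, k) * A $$ (k, i) / d (ht i - 1)"
    if k: "k \<in> children i" for k
  proof -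
    have "ht i = ht k + 1" "k \<noteq> i" using vheight_child[OF k] by auto
    then show ?thesis using parent_factor_child_row[OF k i] by simp
  qed
  then have "(\<Sum>k\<in>children i. - A $$ (i, k) / d (ht k) * parent_factor A d $$ (k, i))
      = (\<Sum>k\<in>children i. A $$ (i, k) * A $$ (k, i)) / d (ht i - 1)"
    unfolding sum_divide_distrib by (intro sum.cong) auto
  moreover have "1 \<le> ht i" using vheight_pos_if_not_leaf[OF i False] .
  ultimately show ?thesis
    using children_factor_mult_parent_factor_entry[OF i i] path_to_hedgeD(3)[OF A i] path_to_hedgeD(4)[OF A i False]
      d_rec[OF _ vheight_le_root[OF i]] i
    unfolding parent_factor_def by simp
qed

lemma children_factor_mult_parent_factor_off_children:
  assumes A: "path_to_hedge a b A" and ij: "i < n" "j < n" "j \<noteq> i" "j \<notin> children i"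
  shows "(children_factor A d * parent_factor A d) $$ (i, j) = - A $$ (i, j)"
proof -
  have "parent_factor A d $$ (k, j) = 0" if k: "k \<in> children i" for k
  proof -
    have "j \<noteq> k" using k ij by blast
    then show ?thesis using parent_factor_child_row[OF k ij(2)] ij by simp
  qed
  moreover have "A $$ (i, j) = 0" if not_parent: "\<not> (i \<noteq> r \<and> j = parent i)"
  proof (rule ccontr)
    assume "A $$ (i, j) \<noteq> 0"
    then have "j \<noteq> r \<and> i = parent j"
      using edge_parent_cases[OF path_to_hedgeD(2)[OF A ij(1,2)]] ij not_parent by auto
    then show False using ij unfolding children_def by simp
  qed
  ultimately show ?thesis
    using children_factor_mult_parent_factor_entry[OF ij(1,2)] ij unfolding parent_factor_def by auto
qed

lemma children_factor_mult_parent_factor: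
  assumes A: "path_to_hedge a b A"
    and d_leaf: "d 0 = x - a 1"
    and d_rec: "\<And>k. 1 \<le> k \<Longrightarrow> k \<le> ht r \<Longrightarrow> d k = x - a (k + 1) - b (k + 1) / d (k - 1)"
    and d_nz: "\<And>k. k < ht r \<Longrightarrow> d k \<noteq> 0"
  shows "children_factor A d * parent_factor A d = - char_matrix A x"
proof (rule eq_matI)
  have A_carrier: "A \<in> carrier_mat n n" by (rule path_to_hedgeD(1)[OF A])
  then show "dim_row (children_factor A d * parent_factor A d) = dim_row (- char_matrix A x)"
    "dim_col (children_factor A d * parent_factor A d) = dim_col (- char_matrix A x)"
    by (auto simp: children_factor_def parent_factor_def char_matrix_def)
  fix i j assume "i < dim_row (- char_matrix A x)" "j < dim_col (- char_matrix A x)"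
  then have i: "i < n" and j: "j < n" using A_carrier by (auto simp: char_matrix_def)
  then have "(- char_matrix A x) $$ (i, j) = (if i = j then x else 0) - A $$ (i, j)"
    using A_carrier by (simp add: char_matrix_def)
  moreover consider (child) "j \<in> children i" | (diag) "j = i" | (other) "j \<noteq> i" "j \<notin> children i"
    by blast
  then have "(children_factor A d * parent_factor A d) $$ (i, j) = (if i = j then x else 0) - A $$ (i, j)"
  proof cases
    case child
    then have "j \<noteq> i" using vheight_child by fastforce
    then show ?thesis using children_factor_mult_parent_factor_child[OF d_nz i child] by simp
  next
    case diag
    then show ?thesis using children_factor_mult_parent_factor_diag[OF A d_leaf d_rec i] by simp
  next
    case other
    then show ?thesis using children_factor_mult_parent_factor_off_children[OF A i j other] by simp
  qed
  ultimately show "(children_factor A d * parent_factor A d) $$ (i, j) = (- char_matrix A x) $$ (i, j)"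
    by simp
qed

lemma char_poly_mult_prod_jacobi_poly:
  assumes A: "path_to_hedge a b A" and b_pos: "\<And>i. 2 \<le> i \<Longrightarrow> b i > 0"
  shows "char_poly A * (\<Prod>v = 0..<n. jacobi_poly a b (ht v))
       = (\<Prod>v = 0..<n. jacobi_poly a b (ht v + 1))"
proof (rule poly_eq_if_eq_outside_finite)
  let ?p = "\<lambda>k. poly (jacobi_poly a b k)"
  let ?Z = "\<Union>k \<le> ht r. {x. ?p k x = 0}"
  show "finite ?Z" using poly_roots_finite jacobi_poly_nonzero[of b, OF b_pos] by auto
  fix x assume "x \<notin> ?Z"
  then have nz: "?p k x \<noteq> 0" if "k \<le> ht r" for k using that by auto
  define d where "d k = ?p (k + 1) x / ?p k x" for k
  have A_carrier: "A \<in> carrier_mat n n" by (rule path_to_hedgeD(1)[OF A])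
  have "children_factor A d * parent_factor A d = - char_matrix A x"
  proof (rule children_factor_mult_parent_factor[OF A])
    show "d 0 = x - a 1" by (simp add: d_def)
  next
    fix k assume k: "1 \<le> k" "k \<le> ht r"
    then obtain j where "k = Suc j" by (cases k) auto
    then show "d k = x - a (k + 1) - b (k + 1) / d (k - 1)"
      using jacobi_ratio_recurrence[of a b j x] nz k unfolding d_def by simp
  next
    fix k assume "k < ht r"
    then show "d k \<noteq> 0" using nz unfolding d_def by simp
  qed
  then have "poly (char_poly A) x = (\<Prod>v = 0..<n. d (ht v))"
    using char_poly_matrix[OF A_carrier] det_mult[of "children_factor A d" n "parent_factor A d"]
      det_children_factor det_parent_factor
    by (simp add: children_factor_def parent_factor_def)
  also have "\<dots> = (\<Prod>v = 0..<n. ?p (ht v + 1) x) / (\<Prod>v = 0..<n. ?p (ht v) x)"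
    unfolding d_def by (simp add: prod_dividef)
  finally show "poly (char_poly A * (\<Prod>v = 0..<n. jacobi_poly a b (ht v))) x
      = poly (\<Prod>v = 0..<n. jacobi_poly a b (ht v + 1)) x"
    using nz vheight_le_root by (simp add: poly_prod prod_zero_iff)
qed

lemma order_char_poly_plus:
  assumes A: "path_to_hedge a b A" and b_pos: "\<And>i. 2 \<le> i \<Longrightarrow> b i > 0"
  shows "order y (char_poly A) + (\<Sum>v = 0..<n. order y (jacobi_poly a b (ht v)))
       = (\<Sum>v = 0..<n. order y (jacobi_poly a b (ht v + 1)))"
proof -
  have "char_poly A \<noteq> 0"
    using degree_monic_char_poly[OF path_to_hedgeD(1)[OF A]] by auto
  moreover have "(\<Prod>v = 0..<n. jacobi_poly a b (ht v)) \<noteq> 0"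
    using jacobi_poly_nonzero[of b, OF b_pos] by (simp add: prod_zero_iff)
  ultimately show ?thesis
    using arg_cong[OF char_poly_mult_prod_jacobi_poly[OF A b_pos], of "order y"]
    by (simp add: order_mult order_prod jacobi_poly_nonzero[of b, OF b_pos])
qed

lemma sum_vertices_by_height:
  fixes g :: "nat \<Rightarrow> 'a::comm_semiring_1"
  shows "(\<Sum>v = 0..<n. g (ht v)) = (\<Sum>k \<le> ht r. of_nat (card (level_set n E r k)) * g k)"
proof -
  have "(\<Sum>v = 0..<n. g (ht v)) = (\<Sum>k \<le> ht r. \<Sum>v \<in> {v \<in> {0..<n}. ht v = k}. g (ht v))"
    by (rule sum.group[symmetric]) (use vheight_le_root in auto)
  also have "\<dots> = (\<Sum>k \<le> ht r. of_nat (card (level_set n E r k)) * g k)"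
    by (intro sum.cong refl) (simp add: level_set_def)
  finally show ?thesis .
qed

lemma mult_eq_sum_ell:
  assumes A: "path_to_hedge a b A" and b_pos: "\<And>i. 2 \<le> i \<Longrightarrow> b i > 0"
  shows "int (mult y A) = (\<Sum>i \<in> {i \<in> {1..ht r + 1}. poly (jacobi_poly a b i) y = 0}. ell n E r i)"
proof -
  define ord where "ord k = int (order y (jacobi_poly a b k))" for k
  define c where "c k = int (card (level_set n E r k))" for k
  have ord: "ord k = (if poly (jacobi_poly a b k) y = 0 then 1 else 0)" for k
    unfolding ord_def by (simp add: order_jacobi_poly[of b, OF b_pos])
  have "level_set n E r (ht r + 1) = {}" unfolding level_set_def using vheight_le_root by fastforce
  then have c_top: "c (ht r + 1) = 0" unfolding c_def by simp
  have "int (mult y A) = (\<Sum>v = 0..<n. ord (ht v + 1)) - (\<Sum>v = 0..<n. ord (ht v))"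
    using arg_cong[OF order_char_poly_plus[OF A b_pos, of y], of int]
    unfolding mult_def ord_def by (simp add: of_nat_sum)
  also have "\<dots> = (\<Sum>k < ht r + 1. c k * (ord (Suc k) - ord k))"
    using sum_vertices_by_height[of "\<lambda>k. ord (k + 1)"] sum_vertices_by_height[of ord]
    unfolding c_def by (simp add: lessThan_Suc_atMost sum_subtractf algebra_simps)
  also have "\<dots> = (\<Sum>i = 1..ht r + 1. ord i * (c (i - 1) - c i))"
    using summation_by_parts[of ord c "ht r + 1"] ord[of 0] c_top by simp
  also have "\<dots> = (\<Sum>i = 1..ht r + 1. if poly (jacobi_poly a b i) y = 0 then ell n E r i else 0)"
    unfolding ord c_def ell_def by (intro sum.cong) auto
  finally show ?thesis by (simp only: sum.inter_filter[OF finite_atLeastAtMost])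
qed

lemma path_to_hedge_if_PH:
  assumes "A \<in> PH (C_Lambda a1 a2 b2 b3 b4 (ht r + 1)) n E r"
  shows "path_to_hedge (coef_a a1 a2 b2 b3 b4) (coef_b a1 a2 b2 b3 b4) A"
proof -
  let ?C = "C_Lambda a1 a2 b2 b3 b4 (ht r + 1)" and ?H = "ht r"
  have R: "in_R n E A"
    and diag: "\<And>v. v < n \<Longrightarrow> A $$ (v, v) = ?C $$ (?H - ht v, ?H - ht v)"
    and child_sum: "\<And>v. v < n \<Longrightarrow> \<not> is_leaf n E r v \<Longrightarrow>
          (\<Sum>u\<in>{u. u < n \<and> is_child E r u v}. A $$ (v, u) * A $$ (u, v))
            = ?C $$ (?H - ht v, ?H - ht v + 1) * ?C $$ (?H - ht v + 1, ?H - ht v)"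
    using assms unfolding PH_def Let_def by auto
  have "?C $$ (?H - ht v, ?H - ht v) = coef_a a1 a2 b2 b3 b4 (ht v + 1)" if "v < n" for v
    using vheight_le_root[OF that] unfolding C_Lambda_def by simp
  moreover have "?C $$ (?H - ht v, ?H - ht v + 1) * ?C $$ (?H - ht v + 1, ?H - ht v)
      = coef_b a1 a2 b2 b3 b4 (ht v + 1)" if "v < n" "\<not> is_leaf n E r v" for v
    using vheight_le_root[OF that(1)] vheight_pos_if_not_leaf[OF that] unfolding C_Lambda_def by simp
  ultimately show ?thesis
    using R diag child_sum unfolding path_to_hedge_def in_R_def children_eq by auto
qed

end

locale B_params =
  fixes a1 a2 b2 b3 b4 :: real
  assumes in_B: "in_B a1 a2 b2 b3 b4"
begin

abbreviation ca :: "nat \<Rightarrow> real" where "ca \<equiv> coef_a a1 a2 b2 b3 b4"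
abbreviation cb :: "nat \<Rightarrow> real" where "cb \<equiv> coef_b a1 a2 b2 b3 b4"
abbreviation \<phi> :: "nat \<Rightarrow> real \<Rightarrow> real" where "\<phi> k x \<equiv> poly (jacobi_poly ca cb k) x"

lemma params_distinct:
  "a1 \<noteq> a2" "a1 \<noteq> b2" "a1 \<noteq> b3" "a1 \<noteq> b4" "a2 \<noteq> b2" "a2 \<noteq> b3" "a2 \<noteq> b4"
  "b2 \<noteq> b3" "b2 \<noteq> b4" "b3 \<noteq> b4"
  using in_B unfolding in_B_def by auto

lemma coef_b_pos: "2 \<le> i \<Longrightarrow> cb i > 0"
proof -
  have "(b2 - a1) * (a1 - a2) > 0 \<and> (b3 - a2) * (b3 - b2) > 0
      \<and> (b4 - a1) * (b3 - b4) * (a2 + b2 - b3 - b4) / (b4 - b2) > 0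
      \<and> (b2 - a1) * (b2 - a2) > 0 \<and> (b3 - a1) * (b3 - a2) > 0 \<and> (b4 - a1) * (b4 - a2) > 0"
    using in_B unfolding in_B_def
    by (elim disjE conjE) (auto simp: zero_less_mult_iff zero_less_divide_iff mult_less_0_iff)
  then show "2 \<le> i \<Longrightarrow> cb i > 0" unfolding coef_b_def Let_def by auto
qed

lemma \<phi>_Suc_Suc: "\<phi> (k + 2) x = (x - ca (k + 2)) * \<phi> (k + 1) x - cb (k + 2) * \<phi> k x"
  using poly_jacobi_poly_Suc_Suc[of ca cb k x] by simp

lemma \<phi>_rec:
  assumes "2 \<le> m" shows "\<phi> m x = (x - ca m) * \<phi> (m - 1) x - cb m * \<phi> (m - 2) x"
proof -
  define k where "k = m - 2"
  then have "m = k + 2" using assms by simp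
  then show ?thesis using \<phi>_Suc_Suc[of k x] by simp
qed

lemma zeros_period2:
  assumes below: "\<And>k. k < j \<Longrightarrow> \<phi> k x \<noteq> 0"
    and base: "\<phi> j x = 0" "\<phi> (j + 1) x \<noteq> 0"
    and diag: "\<And>m. j < m \<Longrightarrow> m mod 2 = j mod 2 \<Longrightarrow> ca m = x"
  shows "\<phi> k x = 0 \<longleftrightarrow> j \<le> k \<and> k mod 2 = j mod 2"
proof (rule zeros_periodic)
  have step: "\<phi> (j + 2 * q) x = 0 \<and> \<phi> (j + 2 * q + 1) x \<noteq> 0" for q
  proof (induction q)
    case (Suc q)
    define k where "k = j + 2 * q"
    have IH: "\<phi> k x = 0" "\<phi> (k + 1) x \<noteq> 0" using Suc unfolding k_def by auto
    have z2: "\<phi> (k + 2) x = 0"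
      using \<phi>_Suc_Suc[of k x] diag[of "k + 2"] IH(1) unfolding k_def by simp
    have "\<phi> (k + 3) x = (x - ca (k + 3)) * \<phi> (k + 2) x - cb (k + 3) * \<phi> (k + 1) x"
      using \<phi>_Suc_Suc[of "k + 1" x] by (simp only: add.assoc semiring_norm one_plus_numeral numeral_plus_one)
    then have "\<phi> (k + 3) x \<noteq> 0" using z2 IH(2) coef_b_pos[of "k + 3"] by simp
    moreover have "j + 2 * Suc q = k + 2" "k + 2 + 1 = k + 3" unfolding k_def by simp_all
    ultimately show ?case using z2 by (simp only:) simp
  qed (use base in simp)
  show "\<phi> (j + 2 * q + s) x = 0 \<longleftrightarrow> s = 0" if "s < 2" for q s
  proof -
    have "s = 0 \<or> s = 1" using that by linarith
    then show ?thesis using step[of q] by auto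
  qed
qed (use below in simp_all)

lemma coef_a_ge_3: "3 \<le> i \<Longrightarrow> ca i = (if odd i then a1 else a2)"
  unfolding coef_a_def by auto

lemma zeros_period3_step:
  assumes j: "2 \<le> j" and base: "\<phi> j x = 0" "\<phi> (j + 1) x \<noteq> 0" "\<phi> (j + 2) x \<noteq> 0"
    and x_ne: "a1 \<noteq> x" "a2 \<noteq> x"
    and offdiag: "\<And>m. 5 \<le> m \<Longrightarrow> m mod 3 = j mod 3 \<Longrightarrow> cb m = (x - a1) * (x - a2)"
  shows "\<phi> (j + 3 * q) x = 0 \<and> \<phi> (j + 3 * q + 1) x \<noteq> 0 \<and> \<phi> (j + 3 * q + 2) x \<noteq> 0"
proof (induction q)
  case (Suc q)
  define k where "k = j + 3 * q"
  have IH: "\<phi> k x = 0" "\<phi> (k + 1) x \<noteq> 0" "\<phi> (k + 2) x \<noteq> 0" using Suc unfolding k_def by auto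
  have "k \<ge> 2" using j unfolding k_def by simp
  then have diag: "ca (k + i) = (if odd (k + i) then a1 else a2)" if "2 \<le> i" for i
    using coef_a_ge_3 that by simp
  have e2: "\<phi> (k + 2) x = (x - ca (k + 2)) * \<phi> (k + 1) x"
    using \<phi>_Suc_Suc[of k x] IH(1) by simp
  have e3: "\<phi> (k + 3) x = (x - ca (k + 3)) * \<phi> (k + 2) x - cb (k + 3) * \<phi> (k + 1) x"
    using \<phi>_Suc_Suc[of "k + 1" x] by (simp only: add.assoc semiring_norm one_plus_numeral numeral_plus_one)
  have e4: "\<phi> (k + 4) x = (x - ca (k + 4)) * \<phi> (k + 3) x - cb (k + 4) * \<phi> (k + 2) x"
    using \<phi>_Suc_Suc[of "k + 2" x] by (simp only: add.assoc semiring_norm one_plus_numeral numeral_plus_one)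
  have e5: "\<phi> (k + 5) x = (x - ca (k + 5)) * \<phi> (k + 4) x - cb (k + 5) * \<phi> (k + 3) x"
    using \<phi>_Suc_Suc[of "k + 3" x] by (simp only: add.assoc semiring_norm one_plus_numeral numeral_plus_one)
  text \<open>Two consecutive diagonal entries are \<open>a1\<close> and \<open>a2\<close>, so \<open>\<phi> (k + 3) x\<close> is
    \<open>\<phi> (k + 1) x\<close> times \<open>(x - a1) * (x - a2) - cb (k + 3)\<close>, which vanishes by the choice of \<open>cb\<close>.\<close>
  have "(x - ca (k + 3)) * (x - ca (k + 2)) = (x - a1) * (x - a2)"
    using diag[of 2] diag[of 3] by (cases "odd k") (auto simp: algebra_simps)
  moreover have "\<phi> (k + 3) x = ((x - ca (k + 3)) * (x - ca (k + 2)) - cb (k + 3)) * \<phi> (k + 1) x"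
    unfolding e3 e2 by (simp add: algebra_simps)
  moreover have "cb (k + 3) = (x - a1) * (x - a2)"
    using offdiag[of "k + 3"] \<open>k \<ge> 2\<close> unfolding k_def by simp
  ultimately have z3: "\<phi> (k + 3) x = 0" by simp
  have n4: "\<phi> (k + 4) x \<noteq> 0"
    using e4 z3 IH(3) coef_b_pos[of "k + 4"] by simp
  moreover have "\<phi> (k + 5) x \<noteq> 0"
    using e5 z3 n4 diag[of 5] x_ne by simp
  moreover have "j + 3 * Suc q = k + 3" "k + 3 + 1 = k + 4" "k + 3 + 2 = k + 5"
    unfolding k_def by simp_all
  ultimately show ?case using z3 by (simp only:) simp
qed (use base in simp)

lemma zeros_period3:
  assumes j: "2 \<le> j" and below: "\<And>k. k < j \<Longrightarrow> \<phi> k x \<noteq> 0"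
    and base: "\<phi> j x = 0" "\<phi> (j + 1) x \<noteq> 0" "\<phi> (j + 2) x \<noteq> 0"
    and x_ne: "a1 \<noteq> x" "a2 \<noteq> x"
    and offdiag: "\<And>m. 5 \<le> m \<Longrightarrow> m mod 3 = j mod 3 \<Longrightarrow> cb m = (x - a1) * (x - a2)"
  shows "\<phi> k x = 0 \<longleftrightarrow> j \<le> k \<and> k mod 3 = j mod 3"
proof (rule zeros_periodic)
  show "\<phi> (j + 3 * q + s) x = 0 \<longleftrightarrow> s = 0" if "s < 3" for q s
  proof -
    have "s = 0 \<or> s = 1 \<or> s = 2" using that by linarith
    then show ?thesis using zeros_period3_step[OF j base x_ne offdiag, of q] by auto
  qed
qed (use below in simp_all)

lemma \<phi>_1: "\<phi> 1 x = x - a1"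
  by (simp add: coef_a_def)

lemma \<phi>_2: "\<phi> 2 x = (x - a2 - b2 + a1) * (x - a1) - (b2 - a1) * (a1 - a2)"
  by (simp add: numeral_2_eq_2 jacobi_poly.simps(3) coef_a_def coef_b_def algebra_simps)

lemma \<phi>_3: "\<phi> 3 x = (x - a1) * \<phi> 2 x - (b3 - a2) * (b3 - b2) * (x - a1)"
  using \<phi>_rec[of 3 x] \<phi>_1 by (simp add: coef_a_def coef_b_def)

lemma zeros_a1: "\<phi> k a1 = 0 \<longleftrightarrow> 1 \<le> k \<and> k mod 2 = 1 mod 2"
proof (rule zeros_period2)
  have "\<phi> 2 a1 = - cb 2" by (simp add: \<phi>_2 coef_b_def)
  then have "\<phi> 2 a1 \<noteq> 0" using coef_b_pos[of 2] by simp
  then show "\<phi> (1 + 1) a1 \<noteq> 0" unfolding one_add_one .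
qed (auto simp: \<phi>_1 coef_a_def)

lemma zeros_a2: "\<phi> k a2 = 0 \<longleftrightarrow> 2 \<le> k \<and> k mod 2 = 2 mod 2"
proof (rule zeros_period2)
  have "\<phi> 2 a2 = 0" by (simp add: \<phi>_2 algebra_simps)
  then have "\<phi> 3 a2 = - cb 3 * (a2 - a1)" using \<phi>_3[of a2] by (simp add: coef_b_def)
  then show "\<phi> (2 + 1) a2 \<noteq> 0" using coef_b_pos[of 3] params_distinct by simp
  show "\<phi> 2 a2 = 0" by fact
  show "\<phi> k a2 \<noteq> 0" if "k < 2" for k
  proof -
    have "k = 0 \<or> k = 1" using that by linarith
    then show ?thesis using \<phi>_1 params_distinct by auto
  qed
qed (auto simp: coef_a_def)

lemma zeros_b2: "\<phi> k b2 = 0 \<longleftrightarrow> 2 \<le> k \<and> k mod 3 = 2 mod 3"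
proof (rule zeros_period3)
  have "\<phi> 2 b2 = 0" by (simp add: \<phi>_2 algebra_simps)
  moreover have "\<phi> 3 b2 \<noteq> 0" using \<phi>_3 calculation coef_b_pos[of 3] params_distinct by (simp add: coef_b_def)
  moreover have "\<phi> 4 b2 \<noteq> 0"
    using \<phi>_rec[of 4 b2] calculation params_distinct by (simp add: coef_a_def)
  ultimately show "\<phi> 2 b2 = 0" "\<phi> (2 + 1) b2 \<noteq> 0" "\<phi> (2 + 2) b2 \<noteq> 0" by simp_all
  show "\<phi> k b2 \<noteq> 0" if "k < 2" for k
  proof -
    have "k = 0 \<or> k = 1" using that by linarith
    then show ?thesis using \<phi>_1 params_distinct by auto
  qed
qed (auto simp: params_distinct coef_b_def)

lemma zeros_b3: "\<phi> k b3 = 0 \<longleftrightarrow> 3 \<le> k \<and> k mod 3 = 3 mod 3"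
proof (rule zeros_period3)
  have "\<phi> 2 b3 = cb 3" by (simp add: \<phi>_2 coef_b_def algebra_simps)
  then have p2: "\<phi> 2 b3 \<noteq> 0" using coef_b_pos[of 3] by simp
  have p3: "\<phi> 3 b3 = 0" using \<phi>_3[of b3] \<open>\<phi> 2 b3 = cb 3\<close> by (simp add: coef_b_def)
  moreover have "\<phi> 4 b3 \<noteq> 0"
    using \<phi>_rec[of 4 b3] p2 p3 coef_b_pos[of 4] by simp
  moreover have "\<phi> 5 b3 \<noteq> 0"
    using \<phi>_rec[of 5 b3] p3 \<open>\<phi> 4 b3 \<noteq> 0\<close> params_distinct by (simp add: coef_a_def)
  ultimately show "\<phi> 3 b3 = 0" "\<phi> (3 + 1) b3 \<noteq> 0" "\<phi> (3 + 2) b3 \<noteq> 0" by simp_all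
  show "\<phi> k b3 \<noteq> 0" if "k < 3" for k
  proof -
    have "k = 0 \<or> k = 1 \<or> k = 2" using that by linarith
    then show ?thesis using \<phi>_1 p2 params_distinct by auto
  qed
qed (auto simp: params_distinct coef_b_def)

lemma zeros_b4: "\<phi> k b4 = 0 \<longleftrightarrow> 4 \<le> k \<and> k mod 3 = 4 mod 3"
proof (rule zeros_period3)
  have "a2 + b2 - b3 - b4 \<noteq> 0" using coef_b_pos[of 4] by (auto simp: coef_b_def)
  have p2: "\<phi> 2 b4 = (b4 - a2) * (b4 - b2)" by (simp add: \<phi>_2 algebra_simps)
  have p3: "\<phi> 3 b4 = (b4 - a1) * (b4 - b3) * (b4 + b3 - a2 - b2)"
    using \<phi>_3[of b4] p2 by (simp add: algebra_simps)
  have p4: "\<phi> 4 b4 = 0"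
    using \<phi>_rec[of 4 b4] p2 p3 params_distinct by (simp add: coef_a_def coef_b_def field_simps)
  have "\<phi> 3 b4 \<noteq> 0" using p3 params_distinct \<open>a2 + b2 - b3 - b4 \<noteq> 0\<close> by auto
  moreover have "\<phi> 5 b4 \<noteq> 0"
    using \<phi>_rec[of 5 b4] p4 calculation coef_b_pos[of 5] by simp
  moreover have "\<phi> 6 b4 \<noteq> 0"
    using \<phi>_rec[of 6 b4] p4 \<open>\<phi> 5 b4 \<noteq> 0\<close> params_distinct by (simp add: coef_a_def)
  ultimately show "\<phi> 4 b4 = 0" "\<phi> (4 + 1) b4 \<noteq> 0" "\<phi> (4 + 2) b4 \<noteq> 0" using p4 by simp_all
  show "\<phi> k b4 \<noteq> 0" if "k < 4" for k
  proof -
    have "k = 0 \<or> k = 1 \<or> k = 2 \<or> k = 3" using that by linarith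
    then show ?thesis using \<phi>_1 p2 \<open>\<phi> 3 b4 \<noteq> 0\<close> params_distinct by auto
  qed
qed (auto simp: params_distinct coef_b_def)

end

theorem mainTheorem6:
  fixes n r :: nat and E :: "nat \<Rightarrow> nat \<Rightarrow> bool" and H :: nat
    and a1 a2 b2 b3 b4 :: real and A :: "real mat"
  assumes "is_hedge n E r"
    and "H = vheight n E r r"
    and "in_B a1 a2 b2 b3 b4"
    and "A \<in> PH (C_Lambda a1 a2 b2 b3 b4 (H + 1)) n E r"
  shows "(\<forall>j\<in>{1, 2}. int (mult (if j = 1 then a1 else a2) A)
            = (\<Sum>i\<in>{i. j \<le> i \<and> i \<le> H + 1 \<and> i mod 2 = j mod 2}. ell n E r i))
       \<and> (\<forall>j\<in>{2, 3, 4}. int (mult (if j = 2 then b2 else if j = 3 then b3 else b4) A)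
            = (\<Sum>i\<in>{i. j \<le> i \<and> i \<le> H + 1 \<and> i mod 3 = j mod 3}. ell n E r i))"
proof -
  interpret hedge n E r by (rule hedge.intro) fact
  interpret B_params a1 a2 b2 b3 b4 by (rule B_params.intro) fact
  have "path_to_hedge ca cb A" using path_to_hedge_if_PH assms(2,4) by simp
  then have mult: "int (mult y A) = (\<Sum>i \<in> {i \<in> {1..H + 1}. \<phi> i y = 0}. ell n E r i)" for y
    using mult_eq_sum_ell coef_b_pos assms(2) by simp
  have count: "int (mult y A) = (\<Sum>i \<in> {i. j \<le> i \<and> i \<le> H + 1 \<and> i mod p = j mod p}. ell n E r i)"
    if "\<And>k. \<phi> k y = 0 \<longleftrightarrow> j \<le> k \<and> k mod p = j mod p" and "1 \<le> j" for y :: real and j p :: nat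
    unfolding mult using that by (intro sum.cong) auto
  show ?thesis
    using count[OF zeros_a1] count[OF zeros_a2] count[OF zeros_b2] count[OF zeros_b3]
      count[OF zeros_b4] by simp
qed

end
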